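(* Let $p,q\ge2$ with $q-1=d(p-1)$ for a positive integer $d$, and let $j_2:F(q)\to F(p)$ be the homomorphism with $j_2(x_i)=x_i^{d}$. Then $$j_2\circ\phi_q^{\,q-1}=\phi_p^{\,d(p-1)}\circ j_2.$$
   Context: For $r\ge2$, $F(r)$ is the group given by the presentation $\langle x_0,x_1,\dots\mid x_i^{-1}x_jx_i=x_{j+r-1}\ (i<j)\rangle$ (the group of piecewise-linear orientation-preserving homeomorphisms of $[0,1]$ with breakpoints in $\mathbb{Z}[1/r]$ and slopes powers of $r$). The shift map $\phi_r:F(r)\to F(r)$ is the endomorphism with $\phi_r(x_i)=x_{i+1}$ for all $i\ge0$. The assignment $x_i\mapsto x_i^d$ respects the relations and defines an injective homomorphism $j_2:F(q)\to F(p)$. *)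

theory Defs
  imports "HOL-Algebra.Algebra"
begin

definition F_relations :: "nat \<Rightarrow> 'a monoid \<Rightarrow> (nat \<Rightarrow> 'a) \<Rightarrow> bool" where
  "F_relations r H y \<longleftrightarrow>
     (\<forall>i. y i \<in> carrier H) \<and>
     (\<forall>i j. i < j \<longrightarrow>
        inv\<^bsub>H\<^esub> (y i) \<otimes>\<^bsub>H\<^esub> y j \<otimes>\<^bsub>H\<^esub> y i = y (j + r - 1))"

text \<open>G, with distinguished elements x_0, x_1, ..., is (a copy of) the group
  presented by generators x_i and the relations above: it is a group generated by
  the x_i, they satisfy the relations, and it has the universal property of the
  presentation (with respect to target groups on the same element type).\<close>
definition F_presentation :: "nat \<Rightarrow> 'a monoid \<Rightarrow> (nat \<Rightarrow> 'a) \<Rightarrow> bool" where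
  "F_presentation r G x \<longleftrightarrow>
     group G \<and> F_relations r G x \<and> carrier G = generate G (range x) \<and>
     (\<forall>(H::'a monoid) y. group H \<and> F_relations r H y \<longrightarrow>
        (\<exists>h \<in> hom G H. \<forall>i. h (x i) = y i))"

end

theory Submission
  imports Defs
begin

(* Both sides are homomorphisms F(q) -> F(p), so it suffices to compare them on the
   generators. phi_q^(q-1) shifts x_i to x_(i+q-1), which j2 sends to x_(i+q-1)^d, while
   j2 sends x_i to x_i^d, which phi_p^(d(p-1)) shifts to x_(i+d(p-1))^d; the two agree
   because q - 1 = d(p - 1). *)

lemma hom_funpow:
  assumes "f \<in> hom G G"
  shows "f ^^ n \<in> hom G G"
proof (induction n)
  case 0
  show ?case by (simp add: hom_def)
next
  case (Suc n)
  then show ?case using hom_compose[OF Suc assms] by (simp add: comp_def)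
qed

lemma funpow_shift:
  assumes "\<And>i. f (x i) = x (i + 1)"
  shows "(f ^^ n) (x i) = x (i + n)"
  by (induction n) (simp_all add: assms)

lemma hom_eq_on_generate:
  assumes "group G" and "group H" and "f \<in> hom G H" and "g \<in> hom G H"
    and S: "S \<subseteq> carrier G" and eq: "\<And>s. s \<in> S \<Longrightarrow> f s = g s"
    and "x \<in> generate G S"
  shows "f x = g x"
proof -
  interpret f: group_hom G H f
    using assms by (simp add: group_hom_def group_hom_axioms_def)
  interpret g: group_hom G H g
    using assms by (simp add: group_hom_def group_hom_axioms_def)
  from \<open>x \<in> generate G S\<close> show ?thesis
  proof induction
    case one
    show ?case by simp
  next
    case (incl h)
    then show ?case by (rule eq)
  next
    case (inv h)
    then show ?case using S eq by auto
  next
    case (eng h1 h2)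
    moreover have "h1 \<in> carrier G" "h2 \<in> carrier G"
      using eng f.G.generate_in_carrier[OF S] by auto
    ultimately show ?case by simp
  qed
qed

lemma F_presentation_hom_eq:
  assumes "F_presentation r G x" and "group H" and "f \<in> hom G H" and "g \<in> hom G H"
    and "\<And>i. f (x i) = g (x i)" and "a \<in> carrier G"
  shows "f a = g a"
proof -
  have "group G" and "range x \<subseteq> carrier G" and "a \<in> generate G (range x)"
    using assms(1,6) unfolding F_presentation_def F_relations_def by auto
  then show ?thesis
    using hom_eq_on_generate[of G H f g "range x" a] assms(2-5) by auto
qed

theorem proposition13:
  fixes p q d :: nat
    and Fq :: "'a monoid" and xq :: "nat \<Rightarrow> 'a"
    and Fp :: "'b monoid" and xp :: "nat \<Rightarrow> 'b"
    and phi_q :: "'a \<Rightarrow> 'a" and phi_p :: "'b \<Rightarrow> 'b" and j2 :: "'a \<Rightarrow> 'b"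
  assumes "p \<ge> 2" and "q \<ge> 2" and "d > 0" and "q - 1 = d * (p - 1)"
    and "F_presentation q Fq xq" and "F_presentation p Fp xp"
    and "phi_q \<in> hom Fq Fq" and "\<And>i. phi_q (xq i) = xq (i + 1)"
    and "phi_p \<in> hom Fp Fp" and "\<And>i. phi_p (xp i) = xp (i + 1)"
    and "j2 \<in> hom Fq Fp" and "\<And>i. j2 (xq i) = xp i [^]\<^bsub>Fp\<^esub> d"
  shows "\<forall>g \<in> carrier Fq.
           j2 ((phi_q ^^ (q - 1)) g) = (phi_p ^^ (d * (p - 1))) (j2 g)"
proof
  fix g assume g: "g \<in> carrier Fq"
  have Fp: "group Fp" and xp: "\<And>i. xp i \<in> carrier Fp"
    using assms(6) unfolding F_presentation_def F_relations_def by auto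
  have phi_p_pow: "phi_p ^^ (d * (p - 1)) \<in> hom Fp Fp"
    using hom_funpow[OF assms(9)] .
  have "(j2 \<circ> phi_q ^^ (q - 1)) g = (phi_p ^^ (d * (p - 1)) \<circ> j2) g"
  proof (rule F_presentation_hom_eq[OF assms(5) Fp _ _ _ g])
    show "j2 \<circ> phi_q ^^ (q - 1) \<in> hom Fq Fp"
      using hom_compose[OF hom_funpow[OF assms(7)] assms(11)] .
    show "phi_p ^^ (d * (p - 1)) \<circ> j2 \<in> hom Fq Fp"
      using hom_compose[OF assms(11) phi_p_pow] .
    fix i
    show "(j2 \<circ> phi_q ^^ (q - 1)) (xq i) = (phi_p ^^ (d * (p - 1)) \<circ> j2) (xq i)"
      using funpow_shift[of phi_q xq, OF assms(8)] funpow_shift[of phi_p xp, OF assms(10)]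
        hom_nat_pow[OF phi_p_pow xp Fp Fp] assms(4,12) by simp
  qed
  then show "j2 ((phi_q ^^ (q - 1)) g) = (phi_p ^^ (d * (p - 1))) (j2 g)" by simp
qed

end
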